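(* Let $G$ be a group with identity $e$, $A$ a finite set, $S\subseteq G$ finite with $e\in S$. Suppose $(\mathcal P,f)$ generates a local map $\mu:A^S\to A$, with $f$ well-behaved, $|S|\ge2$ and $|A|\ge3$. Then $e$ is essential for $\mu$.
   Context: $A^S$ is the set of functions $S\to A$. For $s\in S$, $\mathrm{Res}_s(z)=z|_{S\setminus\{s\}}$. An element $s\in S$ is essential for $\mu$ if there exist $z,w\in A^S$ with $\mathrm{Res}_s(z)=\mathrm{Res}_s(w)$ but $\mu(z)\neq\mu(w)$. The pair $(\mathcal P,f)$ generates $\mu$ if $\mathcal P=\{z\in A^S:\mu(z)\neq z(e)\}$ and $f:\mathcal P\to A$ is the restriction of $\mu$ to $\mathcal P$. The function $f$ is well-behaved if for all $p,q\in\mathcal P$: $p(e)=q(e)$ if and only if $f(p)=f(q)$. *)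

theory Defs
  imports "HOL-Algebra.Group" "HOL-Library.FuncSet"
begin

definition Res :: "'g set \<Rightarrow> 'g \<Rightarrow> ('g \<Rightarrow> 'a) \<Rightarrow> ('g \<Rightarrow> 'a)" where
  "Res S s z = restrict z (S - {s})"

definition essential :: "'g set \<Rightarrow> 'a set \<Rightarrow> (('g \<Rightarrow> 'a) \<Rightarrow> 'a) \<Rightarrow> 'g \<Rightarrow> bool" where
  "essential S A \<mu> s \<longleftrightarrow> s \<in> S \<and>
     (\<exists>z \<in> S \<rightarrow>\<^sub>E A. \<exists>w \<in> S \<rightarrow>\<^sub>E A. Res S s z = Res S s w \<and> \<mu> z \<noteq> \<mu> w)"

definition generates :: "'g set \<Rightarrow> 'a set \<Rightarrow> 'g \<Rightarrow> ('g \<Rightarrow> 'a) set \<Rightarrow> (('g \<Rightarrow> 'a) \<Rightarrow> 'a)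
    \<Rightarrow> (('g \<Rightarrow> 'a) \<Rightarrow> 'a) \<Rightarrow> bool" where
  "generates S A e P f \<mu> \<longleftrightarrow>
     P = {z \<in> S \<rightarrow>\<^sub>E A. \<mu> z \<noteq> z e} \<and> (\<forall>p \<in> P. f p = \<mu> p)"

definition well_behaved :: "'g \<Rightarrow> ('g \<Rightarrow> 'a) set \<Rightarrow> (('g \<Rightarrow> 'a) \<Rightarrow> 'a) \<Rightarrow> bool" where
  "well_behaved e P f \<longleftrightarrow> (\<forall>p \<in> P. \<forall>q \<in> P. p e = q e \<longleftrightarrow> f p = f q)"

end

theory Submission
  imports Defs
begin

text \<open>
  If \<open>e\<close> were inessential, \<open>\<mu>\<close> would ignore the value at \<open>e\<close>. Fix any configuration
  \<open>z\<close> and let \<open>c = \<mu> z\<close>. Since \<open>|A| \<ge> 3\<close> there are two distinct values \<open>a\<^sub>1, a\<^sub>2 \<noteq> c\<close>,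
  and both \<open>z(e := a\<^sub>i)\<close> lie in \<open>\<P>\<close>, since \<open>\<mu>\<close> still maps them to \<open>c\<close>. They differ at \<open>e\<close>
  while \<open>f\<close> takes the same value \<open>c\<close> on them, contradicting well-behavedness.
\<close>

lemma card_ge_3_obtain_two_distinct_avoiding:
  assumes "card A \<ge> 3"
  obtains a b where "a \<in> A" "b \<in> A" "a \<noteq> b" "a \<noteq> c" "b \<noteq> c"
proof -
  have "card (A - {c}) \<ge> 2"
    using assms card_Diff_singleton_if[of A c] by (cases "finite A") auto
  then have "\<not> (\<forall>a\<in>A - {c}. \<forall>b\<in>A - {c}. a = b)"
    using card_le_Suc0_iff_eq[of "A - {c}"] by (cases "finite (A - {c})") auto
  then show thesis
    using that by blast
qed

lemma not_essential_fun_upd: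
  assumes "\<not> essential S A \<mu> s" "s \<in> S" "z \<in> S \<rightarrow>\<^sub>E A" "a \<in> A"
  shows "\<mu> (z(s := a)) = \<mu> z"
proof -
  have "z(s := a) \<in> S \<rightarrow>\<^sub>E A"
    using PiE_fun_upd[where x = s, OF assms(4,3)] by (simp add: insert_absorb assms(2))
  moreover have "Res S s (z(s := a)) = Res S s z"
    by (auto simp: Res_def)
  ultimately show ?thesis
    using assms(1-3) unfolding essential_def by blast
qed

lemma essential_if_generates_well_behaved:
  assumes "card A \<ge> 3" "s \<in> S"
    and gen: "generates S A s P f \<mu>" and wb: "well_behaved s P f"
  shows "essential S A \<mu> s"
proof (rule ccontr)
  assume inessential: "\<not> essential S A \<mu> s"
  from assms(1) obtain a0 where "a0 \<in> A"
    by (metis all_not_in_conv card.empty not_numeral_le_zero)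
  define z where "z = restrict (\<lambda>_. a0) S"
  have z: "z \<in> S \<rightarrow>\<^sub>E A"
    using \<open>a0 \<in> A\<close> by (simp add: z_def)
  obtain a b where ab: "a \<in> A" "b \<in> A" "a \<noteq> b" "a \<noteq> \<mu> z" "b \<noteq> \<mu> z"
    by (rule card_ge_3_obtain_two_distinct_avoiding[OF assms(1)])
  have upd_in_P: "z(s := x) \<in> P" and f_upd: "f (z(s := x)) = \<mu> z"
    if "x \<in> A" "x \<noteq> \<mu> z" for x
  proof -
    have "z(s := x) \<in> S \<rightarrow>\<^sub>E A"
      using PiE_fun_upd[where x = s, OF \<open>x \<in> A\<close> z] by (simp add: insert_absorb \<open>s \<in> S\<close>)
    moreover have "\<mu> (z(s := x)) = \<mu> z"
      using not_essential_fun_upd[OF inessential \<open>s \<in> S\<close> z \<open>x \<in> A\<close>] .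
    ultimately show "z(s := x) \<in> P" "f (z(s := x)) = \<mu> z"
      using gen that(2) unfolding generates_def by auto
  qed
  have "f (z(s := a)) = f (z(s := b))"
    using f_upd ab by simp
  then have "(z(s := a)) s = (z(s := b)) s"
    using wb upd_in_P ab unfolding well_behaved_def by blast
  with ab(3) show False
    by simp
qed

theorem mainTheorem5:
  fixes G :: "('g, 'b) monoid_scheme" and A :: "'a set" and S :: "'g set"
    and \<mu> :: "('g \<Rightarrow> 'a) \<Rightarrow> 'a" and P :: "('g \<Rightarrow> 'a) set" and f :: "('g \<Rightarrow> 'a) \<Rightarrow> 'a"
  assumes "group G"
    and "finite A"
    and "S \<subseteq> carrier G" and "finite S" and "\<one>\<^bsub>G\<^esub> \<in> S"
    and "\<mu> \<in> (S \<rightarrow>\<^sub>E A) \<rightarrow> A"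
    and "generates S A \<one>\<^bsub>G\<^esub> P f \<mu>"
    and "well_behaved \<one>\<^bsub>G\<^esub> P f"
    and "card S \<ge> 2" and "card A \<ge> 3"
  shows "essential S A \<mu> \<one>\<^bsub>G\<^esub>"
  using essential_if_generates_well_behaved[OF assms(10,5,7,8)] .

end
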